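(* Let $(\alpha,\beta)\in Q$. Then the GAFS sequence satisfies, for all $k\ge0$: (1) $Ax_{k+1}=b$; (2) $x_{k+1}>0$; (3) $c^Tx_{k+1}<c^Tx_k$.
   Context: Let $A\in\mathbb{R}^{m\times n}$ have rank $m$, $b\in\mathbb{R}^m$, $c\in\mathbb{R}^n$. Primal LP: $\min c^Tx$ s.t. $Ax=b$, $x\ge 0$; dual LP: $\max b^Ty$ s.t. $A^Ty+s=c$, $s\ge 0$. Standing assumptions: the primal has a strictly positive feasible point; $c^Tx$ is not constant on the primal feasible region; the LP has an optimal solution. For $u\in\mathbb{R}^n$, $\gamma(u)=\max\{u_i: u_i>0\}$; $\|\cdot\|$ is the Euclidean norm. For $x>0$, $X=\mathrm{diag}(x)$. GAFS sequence: fix $\alpha\in(0,1)$, $\beta\in[0,1)$, and $x_0>0$ with $Ax_0=b$. For $k\ge0$ let $X_k=\mathrm{diag}(x_k)$, $y_k=(AX_k^2A^T)^{-1}AX_k^2c$, $s_k=c-A^Ty_k$. Set $x_1=x_0-\alpha\frac{X_0^2s_0}{\gamma(X_0s_0)}$ and, for $k\ge1$, $x_{k+1}=x_k-\alpha\frac{X_k^2s_k}{\gamma(X_ks_k)}+\beta\frac{x_k-x_{k-1}}{\|X_k^{-1}(x_k-x_{k-1})\|_\infty}$ (it is assumed all quantities are well defined). $Q=\{(\alpha,\beta): 0<\alpha<1,\ 0\le\beta<1/\phi,\ \alpha+\beta\le 2/3\}$ with $\phi=(1+\sqrt5)/2$. *)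

theory Defs
  imports "HOL-Analysis.Analysis"
begin

text \<open>gamma(u) = max of the positive entries of u (meaningful when some entry is positive).\<close>
definition gam :: "real^'n \<Rightarrow> real" where
  "gam u = Max {u $ i | i. u $ i > 0}"

definition diagm :: "real^'n \<Rightarrow> real^'n^'n" where
  "diagm x = (\<chi> i j. if i = j then x $ i else 0)"

definition infnorm_v :: "real^'n \<Rightarrow> real" where
  "infnorm_v v = Max (range (\<lambda>i. \<bar>v $ i\<bar>))"

definition dual_y :: "real^'n^'m \<Rightarrow> real^'n \<Rightarrow> real^'n \<Rightarrow> real^'m" where
  "dual_y A c x = matrix_inv (A ** diagm x ** diagm x ** transpose A) *v (A ** diagm x ** diagm x *v c)"

definition slack_s :: "real^'n^'m \<Rightarrow> real^'n \<Rightarrow> real^'n \<Rightarrow> real^'n" where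
  "slack_s A c x = c - transpose A *v dual_y A c x"

definition as_step :: "real^'n^'m \<Rightarrow> real^'n \<Rightarrow> real^'n \<Rightarrow> real^'n" where
  "as_step A c x = (1 / gam (diagm x *v slack_s A c x)) *\<^sub>R (diagm x ** diagm x *v slack_s A c x)"

definition mom_step :: "real^'n \<Rightarrow> real^'n \<Rightarrow> real^'n" where
  "mom_step xk xp = (1 / infnorm_v (\<chi> i. (xk $ i - xp $ i) / xk $ i)) *\<^sub>R (xk - xp)"

fun gafs :: "real^'n^'m \<Rightarrow> real^'n \<Rightarrow> real \<Rightarrow> real \<Rightarrow> real^'n \<Rightarrow> nat \<Rightarrow> real^'n" where
  "gafs A c \<alpha> \<beta> x0 0 = x0"
| "gafs A c \<alpha> \<beta> x0 (Suc 0) = x0 - \<alpha> *\<^sub>R as_step A c x0"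
| "gafs A c \<alpha> \<beta> x0 (Suc (Suc k)) =
     gafs A c \<alpha> \<beta> x0 (Suc k) - \<alpha> *\<^sub>R as_step A c (gafs A c \<alpha> \<beta> x0 (Suc k))
     + \<beta> *\<^sub>R mom_step (gafs A c \<alpha> \<beta> x0 (Suc k)) (gafs A c \<alpha> \<beta> x0 k)"

text \<open>Well-definedness of the quantities used at step k (to form x_{k+1}):
  A X_k^2 A^T invertible, X_k s_k has a positive entry (gamma defined),
  and for k >= 1, x_k \<noteq> x_{k-1} (momentum normalisation defined).\<close>
definition gafs_wd :: "real^'n^'m \<Rightarrow> real^'n \<Rightarrow> real \<Rightarrow> real \<Rightarrow> real^'n \<Rightarrow> nat \<Rightarrow> bool" where
  "gafs_wd A c \<alpha> \<beta> x0 k \<longleftrightarrow>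
     (let x = gafs A c \<alpha> \<beta> x0 k in
       invertible (A ** diagm x ** diagm x ** transpose A)
       \<and> (\<exists>i. (diagm x *v slack_s A c x) $ i > 0)
       \<and> (k \<ge> 1 \<longrightarrow> x \<noteq> gafs A c \<alpha> \<beta> x0 (k - 1)))"

definition golden :: real where "golden = (1 + sqrt 5) / 2"

definition Qreg :: "(real \<times> real) set" where
  "Qreg = {(a, b). 0 < a \<and> a < 1 \<and> 0 \<le> b \<and> b < 1 / golden \<and> a + b \<le> 2/3}"

end

theory Submission
  imports Defs
begin

text \<open>Both directions of a GAFS step lie in the null space of \<open>A\<close>, so feasibility is kept. The
  affine-scaling direction \<open>d = X\<^sup>2s/\<gamma>(Xs)\<close> satisfies \<open>d\<^sub>i \<le> x\<^sub>i\<close> and \<open>c\<^sup>Td = \<parallel>Xs\<parallel>\<^sup>2/\<gamma>(Xs) > 0\<close>; the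
  normalised momentum \<open>m\<close> satisfies \<open>m\<^sub>i \<ge> -x\<^sub>i\<close> and, once the previous step decreased the
  objective, \<open>c\<^sup>Tm < 0\<close>. Hence every coordinate of \<open>x - \<alpha>d + \<beta>m\<close> is at least
  \<open>(1 - \<alpha> - \<beta>) x\<^sub>i > 0\<close> and the objective strictly decreases, which propagates by induction.\<close>

lemma matrix_mul_matrix_inv: "invertible M \<Longrightarrow> M ** matrix_inv M = mat 1"
  unfolding invertible_def matrix_inv_def by (rule someI_ex[THEN conjunct1])

lemma diagm_mult_vector: "diagm x *v v = (\<chi> i. x $ i * v $ i)"
proof -
  have "(\<Sum>j\<in>UNIV. (if i = j then x $ i else 0) * v $ j) = x $ i * v $ i" for i
  proof -
    have "(\<lambda>j. (if i = j then x $ i else 0) * v $ j) = (\<lambda>j. if i = j then x $ i * v $ i else 0)"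
      by auto
    thus ?thesis by (simp only:) simp
  qed
  thus ?thesis by (simp add: diagm_def matrix_vector_mult_def vec_eq_iff)
qed

lemma nth_le_gam:
  assumes "\<exists>j. u $ j > (0::real)"
  shows "u $ i \<le> gam u" and gam_pos: "gam u > 0"
proof -
  let ?S = "{u $ i | i. u $ i > 0}"
  have fin: "finite ?S"
    by (rule finite_subset[of _ "range (\<lambda>i. u $ i)"]) auto
  have le: "u $ j \<le> gam u" if "u $ j > 0" for j
    unfolding gam_def using fin that by (intro Max_ge) auto
  show "gam u > 0"
    using assms le by force
  then show "u $ i \<le> gam u"
    using le[of i] by fastforce
qed

lemma abs_nth_le_infnorm_v: "\<bar>v $ i\<bar> \<le> infnorm_v v"
  unfolding infnorm_v_def by (rule Max_ge) auto

lemma infnorm_v_pos: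
  assumes "v \<noteq> 0"
  shows "infnorm_v v > 0"
proof -
  obtain i where "v $ i \<noteq> 0"
    using assms by (auto simp: vec_eq_iff)
  then show ?thesis
    using abs_nth_le_infnorm_v[of v i] by linarith
qed

lemma A_as_step_eq_0:
  assumes "invertible (A ** diagm x ** diagm x ** transpose A)"
  shows "A *v as_step A c x = 0"
proof -
  let ?M = "A ** diagm x ** diagm x ** transpose A"
  let ?w = "A ** diagm x ** diagm x *v c"
  have "?M *v (matrix_inv ?M *v ?w) = ?w"
    by (subst matrix_vector_mul_assoc) (simp add: matrix_mul_matrix_inv[OF assms])
  then have "A *v (diagm x ** diagm x *v slack_s A c x) = 0"
    by (simp add: slack_s_def dual_y_def matrix_vector_mult_diff_distrib
        matrix_vector_mul_assoc matrix_mul_assoc)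
  then show ?thesis
    by (simp add: as_step_def matrix_vector_mult_scaleR)
qed

lemma as_step_nth_le:
  assumes "\<exists>j. (diagm x *v slack_s A c x) $ j > 0" and "x $ i > 0"
  shows "as_step A c x $ i \<le> x $ i"
proof -
  let ?u = "diagm x *v slack_s A c x"
  have "x $ i * ?u $ i \<le> x $ i * gam ?u"
    using nth_le_gam[OF assms(1)] assms(2) by (simp add: mult_left_mono)
  then have "x $ i * ?u $ i / gam ?u \<le> x $ i"
    using gam_pos[OF assms(1)] by (simp add: divide_le_eq)
  moreover have "as_step A c x $ i = x $ i * ?u $ i / gam ?u"
    by (simp add: as_step_def diagm_mult_vector matrix_vector_mul_assoc[symmetric])
  ultimately show ?thesis by simp
qed

lemma inner_as_step_pos:
  assumes inv: "invertible (A ** diagm x ** diagm x ** transpose A)"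
    and pos: "\<exists>j. (diagm x *v slack_s A c x) $ j > 0"
  shows "c \<bullet> as_step A c x > 0"
proof -
  define s where "s = slack_s A c x"
  define u where "u = diagm x *v s"
  define v where "v = diagm x ** diagm x *v s"
  have g: "gam u > 0"
    using gam_pos[OF pos] unfolding u_def s_def .
  have as: "as_step A c x = (1 / gam u) *\<^sub>R v"
    unfolding as_step_def u_def v_def s_def ..
  have "A *v v = 0"
    using A_as_step_eq_0[OF inv, of c] g by (simp add: as matrix_vector_mult_scaleR)
  \<comment> \<open>\<open>c - s\<close> lies in the range of \<open>A\<^sup>T\<close>, which is orthogonal to \<open>v\<close>\<close>
  then have "c \<bullet> v = s \<bullet> v"
    by (simp add: s_def slack_s_def inner_diff_left dot_lmul_matrix)
  also have "\<dots> = (\<Sum>i\<in>UNIV. (u $ i)\<^sup>2)"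
    unfolding inner_vec_def u_def v_def
    by (simp add: diagm_mult_vector matrix_vector_mul_assoc[symmetric] power2_eq_square mult_ac)
  also have "\<dots> > 0"
  proof -
    obtain j where "u $ j > 0"
      using pos unfolding u_def s_def by auto
    then have "0 < (u $ j)\<^sup>2" by simp
    also have "\<dots> \<le> (\<Sum>i\<in>UNIV. (u $ i)\<^sup>2)"
      by (rule member_le_sum) auto
    finally show ?thesis .
  qed
  finally show ?thesis
    using g by (simp add: as)
qed

lemma mom_step_nth:
  "mom_step xk xp $ i = (xk $ i - xp $ i) / infnorm_v (\<chi> j. (xk $ j - xp $ j) / xk $ j)"
  by (simp add: mom_step_def)

lemma mom_step_norm_pos:
  assumes "xk \<noteq> xp" "\<forall>i. xk $ i > (0::real)"
  shows "infnorm_v (\<chi> j. (xk $ j - xp $ j) / xk $ j) > 0"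
proof (rule infnorm_v_pos)
  obtain j where "xk $ j \<noteq> xp $ j"
    using assms(1) by (auto simp: vec_eq_iff)
  then show "(\<chi> j. (xk $ j - xp $ j) / xk $ j) \<noteq> 0"
    using assms(2)[rule_format, of j] by (auto simp: vec_eq_iff)
qed

lemma A_mom_step_eq_0: "A *v xk = A *v xp \<Longrightarrow> A *v mom_step xk xp = 0"
  by (simp add: mom_step_def matrix_vector_mult_scaleR matrix_vector_mult_diff_distrib)

lemma mom_step_nth_ge:
  assumes "xk \<noteq> xp" "\<forall>i. xk $ i > (0::real)"
  shows "mom_step xk xp $ i \<ge> - xk $ i"
proof -
  define N where "N = infnorm_v (\<chi> j. (xk $ j - xp $ j) / xk $ j)"
  have N: "N > 0"
    using mom_step_norm_pos[OF assms] unfolding N_def .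
  have xi: "xk $ i > 0"
    using assms(2) by blast
  have "\<bar>xk $ i - xp $ i\<bar> / xk $ i \<le> N"
    using abs_nth_le_infnorm_v[of "\<chi> j. (xk $ j - xp $ j) / xk $ j" i] xi
    unfolding N_def by simp
  then have "- (N * xk $ i) \<le> xk $ i - xp $ i"
    using xi by (simp add: divide_le_eq abs_le_iff)
  then show ?thesis
    using N by (simp add: mom_step_nth N_def[symmetric] le_divide_eq mult.commute)
qed

lemma inner_mom_step_neg:
  assumes "xk \<noteq> xp" "\<forall>i. xk $ i > (0::real)" "c \<bullet> xk < c \<bullet> xp"
  shows "c \<bullet> mom_step xk xp < 0"
  using mom_step_norm_pos[OF assms(1,2)] assms(3)
  by (simp add: mom_step_def inner_diff_right divide_neg_pos)

lemma as_step_descent_direction: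
  assumes "invertible (A ** diagm x ** diagm x ** transpose A)"
    and pos: "\<exists>j. (diagm x *v slack_s A c x) $ j > 0" and "\<forall>i. x $ i > 0"
  shows "A *v as_step A c x = 0" "\<forall>i. as_step A c x $ i \<le> x $ i" "c \<bullet> as_step A c x > 0"
  using assms by (simp_all add: A_as_step_eq_0 as_step_nth_le[OF pos] inner_as_step_pos)

lemma mom_step_direction:
  assumes "xk \<noteq> xp" "\<forall>i. xk $ i > (0::real)" "A *v xk = A *v xp" "c \<bullet> xk < c \<bullet> xp"
  shows "A *v mom_step xk xp = 0" "\<forall>i. mom_step xk xp $ i \<ge> - xk $ i"
    "c \<bullet> mom_step xk xp \<le> 0"
  using assms A_mom_step_eq_0 mom_step_nth_ge inner_mom_step_neg less_imp_le by blast+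

lemma feasible_descent_step:
  fixes x d m :: "real^'n"
  assumes x: "A *v x = b" "\<forall>i. x $ i > 0"
    and d: "A *v d = 0" "\<forall>i. d $ i \<le> x $ i" "c \<bullet> d > 0"
    and m: "A *v m = 0" "\<forall>i. m $ i \<ge> - x $ i" "c \<bullet> m \<le> 0"
    and step: "0 < \<alpha>" "0 \<le> \<beta>" "\<alpha> + \<beta> < 1"
  shows "A *v (x - \<alpha> *\<^sub>R d + \<beta> *\<^sub>R m) = b"
    and "\<forall>i. (x - \<alpha> *\<^sub>R d + \<beta> *\<^sub>R m) $ i > 0"
    and "c \<bullet> (x - \<alpha> *\<^sub>R d + \<beta> *\<^sub>R m) < c \<bullet> x"
proof -
  show "A *v (x - \<alpha> *\<^sub>R d + \<beta> *\<^sub>R m) = b"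
    using x(1) d(1) m(1)
    by (simp add: matrix_vector_mult_diff_distrib matrix_vector_right_distrib
        matrix_vector_mult_scaleR)
  show "\<forall>i. (x - \<alpha> *\<^sub>R d + \<beta> *\<^sub>R m) $ i > 0"
  proof
    fix i
    have "\<alpha> * d $ i \<le> \<alpha> * x $ i"
      using d(2) step by (simp add: mult_left_mono)
    moreover have "\<beta> * (- x $ i) \<le> \<beta> * m $ i"
      using m(2) step by (intro mult_left_mono) auto
    moreover have "(\<alpha> + \<beta>) * x $ i < x $ i"
      using x(2) step by simp
    ultimately show "(x - \<alpha> *\<^sub>R d + \<beta> *\<^sub>R m) $ i > 0"
      by (simp add: distrib_right)
  qed
  show "c \<bullet> (x - \<alpha> *\<^sub>R d + \<beta> *\<^sub>R m) < c \<bullet> x"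
  proof -
    have "\<beta> * (c \<bullet> m) \<le> 0" "\<alpha> * (c \<bullet> d) > 0"
      using d(3) m(3) step by (simp_all add: mult_nonneg_nonpos)
    then show ?thesis
      by (simp add: inner_diff_right inner_add_right)
  qed
qed

lemma gafs_feasible_descent:
  fixes A :: "real^'n^'m"
  assumes Q: "(\<alpha>, \<beta>) \<in> Qreg"
    and x0: "A *v x0 = b" "\<forall>i. x0 $ i > 0"
    and wd: "\<forall>j\<le>k. gafs_wd A c \<alpha> \<beta> x0 j"
  shows "A *v gafs A c \<alpha> \<beta> x0 (Suc k) = b \<and> (\<forall>i. gafs A c \<alpha> \<beta> x0 (Suc k) $ i > 0)
       \<and> c \<bullet> gafs A c \<alpha> \<beta> x0 (Suc k) < c \<bullet> gafs A c \<alpha> \<beta> x0 k"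
  using wd
proof (induction k rule: less_induct)
  case (less k)
  show ?case
  proof (cases k)
    case 0
    have "invertible (A ** diagm x0 ** diagm x0 ** transpose A)"
      and "\<exists>j. (diagm x0 *v slack_s A c x0) $ j > 0"
      using less.prems by (auto simp: gafs_wd_def Let_def 0)
    note d = as_step_descent_direction[OF this x0(2)]
    have m: "A *v 0 = 0" "\<forall>i. (0 :: real^'n) $ i \<ge> - x0 $ i" "c \<bullet> 0 \<le> 0"
      using x0(2) by (simp_all add: less_imp_le)
    have "0 < \<alpha>" "0 \<le> (0::real)" "\<alpha> + 0 < 1"
      using Q by (simp_all add: Qreg_def)
    from feasible_descent_step[OF x0 d m this] show ?thesis
      by (simp add: 0)
  next
    case (Suc n)
    let ?xp = "gafs A c \<alpha> \<beta> x0 n"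
    let ?x = "gafs A c \<alpha> \<beta> x0 (Suc n)"
    have x: "A *v ?x = b" "\<forall>i. ?x $ i > 0" and descent: "c \<bullet> ?x < c \<bullet> ?xp"
      using less Suc by auto
    have "A *v ?xp = b"
    proof (cases n)
      case (Suc m)
      then show ?thesis
        using less \<open>k = Suc n\<close> by auto
    qed (use x0 in simp)
    have "invertible (A ** diagm ?x ** diagm ?x ** transpose A)"
      and "\<exists>j. (diagm ?x *v slack_s A c ?x) $ j > 0" and moved: "?x \<noteq> ?xp"
      using less.prems[rule_format, of k] by (auto simp: gafs_wd_def Let_def Suc)
    note d = as_step_descent_direction[OF this(1,2) x(2)]
    have "A *v ?x = A *v ?xp"
      using x(1) \<open>A *v ?xp = b\<close> by simp
    note m = mom_step_direction[OF moved x(2) this descent]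
    have "0 < \<alpha>" "0 \<le> \<beta>" "\<alpha> + \<beta> < 1"
      using Q by (simp_all add: Qreg_def)
    from feasible_descent_step[OF x d m this] show ?thesis
      by (simp add: Suc)
  qed
qed

text \<open>The standing LP assumptions and the golden-ratio bound on \<open>\<beta>\<close> are unused: one step needs
  only well-definedness and \<open>\<alpha> + \<beta> < 1\<close>; they matter for convergence.\<close>

theorem theorem2:
  fixes A :: "real^'n^'m" and b :: "real^'m" and c :: "real^'n"
    and x0 :: "real^'n" and \<alpha> \<beta> :: real and k :: nat
  assumes rankA: "rank A = CARD('m)"
    and strict_feas: "\<exists>x. A *v x = b \<and> (\<forall>i. x $ i > 0)"
    and nonconst: "\<not> (\<exists>d. \<forall>x. A *v x = b \<and> (\<forall>i. x $ i \<ge> 0) \<longrightarrow> c \<bullet> x = d)"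
    and has_opt: "\<exists>x. A *v x = b \<and> (\<forall>i. x $ i \<ge> 0) \<and>
                    (\<forall>z. A *v z = b \<and> (\<forall>i. z $ i \<ge> 0) \<longrightarrow> c \<bullet> x \<le> c \<bullet> z)"
    and Q: "(\<alpha>, \<beta>) \<in> Qreg"
    and x0_feas: "A *v x0 = b" and x0_pos: "\<forall>i. x0 $ i > 0"
    and wd: "\<forall>j\<le>k. gafs_wd A c \<alpha> \<beta> x0 j"
  shows "A *v gafs A c \<alpha> \<beta> x0 (Suc k) = b
       \<and> (\<forall>i. gafs A c \<alpha> \<beta> x0 (Suc k) $ i > 0)
       \<and> c \<bullet> gafs A c \<alpha> \<beta> x0 (Suc k) < c \<bullet> gafs A c \<alpha> \<beta> x0 k"
  using gafs_feasible_descent[OF Q x0_feas x0_pos wd] by blast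

end
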